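(* Let $g_{GB}$ and $g_{GF}$ be independent random variables, where $g_{GB}=|h_{GB}|^2d_{GB}^{-\alpha}$ with $d_{GB}$ the distance to the origin of a point uniform in the disc $|z|\le R_1$, and $g_{GF}=|h_{GF}|^2d_{GF}^{-\alpha}$ with $d_{GF}$ the distance to the origin of a point uniform in the annulus $R_1\le|z|\le R_2$, the fading powers $|h_{GB}|^2,|h_{GF}|^2$ being exponential (means $\lambda_{GB},\lambda_{GF}$) and independent of the distances. Let $P_{GB},P_{GF},\sigma^2>0$, $\rho_{GB}=P_{GB}/\sigma^2$, $\rho_{GF}=P_{GF}/\sigma^2$, $\gamma_{th}^{GB}>0$, and define $$P^{GB,I}_{out,p_2}=\Pr\left\{\frac{\rho_{GB}g_{GB}}{\rho_{GF}g_{GF}+1}<\gamma_{th}^{GB},\ g_{GF}<\frac{P_{GB}}{P_{GF}}g_{GB}\right\}.$$ Let $F^{near}_{g_{GB}}$ be the CDF of $g_{GB}$ and $f^{far}_{g_{GF}}$ the density of $g_{GF}$. Then: (a) if $\gamma_{th}^{GB}>1$, $$P^{GB,I}_{out,p_2}=\int_0^\infty F^{near}_{g_{GB}}\!\left(\frac{\gamma_{th}^{GB}\rho_{GF}x+\gamma_{th}^{GB}}{\rho_{GB}}\right)f^{far}_{g_{GF}}(x)\,dx-\int_0^\infty F^{near}_{g_{GB}}\!\left(\frac{\rho_{GF}}{\rho_{GB}}x\right)f^{far}_{g_{GF}}(x)\,dx;$$ (b) if $\gamma_{th}^{GB}\le1$, then with $\sigma_1=\frac{\gamma_{th}^{GB}}{\rho_{GF}(1-\gamma_{th}^{GB})}$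 (interpreted as $\sigma_1=+\infty$ when $\gamma_{th}^{GB}=1$), $$P^{GB,I}_{out,p_2}=\int_0^{\sigma_1} F^{near}_{g_{GB}}\!\left(\frac{\gamma_{th}^{GB}\rho_{GF}x+\gamma_{th}^{GB}}{\rho_{GB}}\right)f^{far}_{g_{GF}}(x)\,dx-\int_0^{\sigma_1} F^{near}_{g_{GB}}\!\left(\frac{\rho_{GF}}{\rho_{GB}}x\right)f^{far}_{g_{GF}}(x)\,dx.$$
   Context: Setting ("Scenario I", dynamic protocol) of an uplink semi-grant-free NOMA pair: a grant-based (GB) user is the near user in a disc of radius $R_1$ around the base station at the origin and a grant-free (GF) user is the far user in the annulus between radii $R_1<R_2$; $\alpha>0$ is the path loss exponent, $\sigma^2$ the noise power, $P_{GB},P_{GF}$ transmit powers. The GF user is admitted only if $P_{GF}g_{GF}<P_{GB}g_{GB}$, and $P^{GB,I}_{out,p_2}$ is the outage probability of the GB user with target SINR $\gamma_{th}^{GB}$. *)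

theory Defs
  imports "HOL-Probability.Probability"
begin

definition annulus :: "real \<Rightarrow> real \<Rightarrow> complex set" where
  "annulus r1 r2 = {z. r1 \<le> cmod z \<and> cmod z \<le> r2}"

definition gain :: "real \<Rightarrow> ('a \<Rightarrow> real) \<Rightarrow> ('a \<Rightarrow> complex) \<Rightarrow> 'a \<Rightarrow> real" where
  "gain \<alpha> h z \<omega> = h \<omega> * cmod (z \<omega>) powr (- \<alpha>)"

end

(*
  Condition on the far user's gain Y = y, which is independent of the near user's gain X.
  For y > 0 the outage event is the slice rho_F y / rho_B < X < (gamma rho_F y + gamma) / rho_B,
  which is nonempty exactly when rho_F y < gamma rho_F y + gamma, i.e. for all y when gamma >= 1
  and for y < sigma_1 otherwise.  Since X = |h|^2 d^(-alpha) with |h|^2 absolutely continuous and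
  independent of d, X has no atoms, so the slice has probability F(upper end) - F(lower end).
  Integrating against the density f of Y (which vanishes on the negative axis) and splitting the
  integral gives the two terms.
*)

theory Submission
  imports Defs
begin

lemma distr_lborel_eq_distr_borel: "distr M lborel X = distr M borel X"
  by (rule distr_cong) simp_all

lemma (in prob_space) indep_var_emeasure_slice:
  fixes U V :: "'a \<Rightarrow> real"
  assumes ind: "indep_var borel V borel U" and S: "S \<in> sets (borel \<Otimes>\<^sub>M borel)"
  shows "emeasure M {\<omega>\<in>space M. (V \<omega>, U \<omega>) \<in> S} =
     (\<integral>\<^sup>+v. emeasure (distr M borel U) (Pair v -` S) \<partial>distr M borel V)"
proof -
  have rv: "random_variable borel V" "random_variable borel U"
    using ind by (auto dest: indep_var_rv1 indep_var_rv2)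
  interpret PU: prob_space "distr M borel U" by (rule prob_space_distr) (rule rv)
  have "{\<omega>\<in>space M. (V \<omega>, U \<omega>) \<in> S} = (\<lambda>x. (V x, U x)) -` S \<inter> space M" by auto
  then have "emeasure M {\<omega>\<in>space M. (V \<omega>, U \<omega>) \<in> S}
      = emeasure (distr M (borel \<Otimes>\<^sub>M borel) (\<lambda>x. (V x, U x))) S"
    using rv S by (simp add: emeasure_distr)
  also have "\<dots> = emeasure (distr M borel V \<Otimes>\<^sub>M distr M borel U) S"
    using ind by (simp add: indep_var_distribution_eq)
  also have "\<dots> = (\<integral>\<^sup>+v. emeasure (distr M borel U) (Pair v -` S) \<partial>distr M borel V)"
    by (rule PU.emeasure_pair_measure_alt) (use S in \<open>simp cong: sets_pair_measure_cong\<close>)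
  finally show ?thesis .
qed

lemma (in prob_space) indep_var_compose_pairs:
  fixes X :: "'i \<Rightarrow> 'a \<Rightarrow> real" and \<phi> \<psi> :: "real \<times> real \<Rightarrow> real"
  assumes ind: "indep_vars (\<lambda>_. borel) X I"
    and I: "i \<in> I" "k \<in> I" "j \<in> I" "l \<in> I" "{i, k} \<inter> {j, l} = {}"
    and [measurable]: "\<phi> \<in> borel_measurable borel" "\<psi> \<in> borel_measurable borel"
  shows "indep_var borel (\<lambda>\<omega>. \<phi> (X i \<omega>, X k \<omega>)) borel (\<lambda>\<omega>. \<psi> (X j \<omega>, X l \<omega>))"
proof -
  have "indep_var borel ((\<lambda>g. \<phi> (g i, g k)) \<circ> (\<lambda>\<omega>. restrict (\<lambda>i. X i \<omega>) {i, k}))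
                  borel ((\<lambda>g. \<psi> (g j, g l)) \<circ> (\<lambda>\<omega>. restrict (\<lambda>i. X i \<omega>) {j, l}))"
    using I by (intro indep_var_compose[OF indep_var_restrict[OF ind]]) auto
  then show ?thesis
    by (simp add: comp_def)
qed

lemma (in prob_space) emeasure_indep_density_mult_eq_0:
  fixes H D :: "'a \<Rightarrow> real" and w :: "real \<Rightarrow> real"
  assumes ind: "indep_var borel D borel H" and H: "distributed M lborel H g"
    and w[measurable]: "w \<in> borel_measurable borel" and c: "c \<noteq> 0"
  shows "emeasure M {\<omega>\<in>space M. H \<omega> * w (D \<omega>) = c} = 0"
proof -
  let ?S = "{p\<in>space (borel \<Otimes>\<^sub>M borel). snd p * w (fst p) = c}"
  have S: "?S \<in> sets (borel \<Otimes>\<^sub>M borel)" by measurable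
  have null: "emeasure (distr M borel H) (Pair v -` ?S) = 0" for v
  proof -
    have sub: "Pair v -` ?S \<subseteq> {c / w v}"
      using c by (auto simp: field_simps)
    have single: "emeasure (distr M borel H) {c / w v} = 0"
      using H AE_lborel_singleton[of "c / w v"]
      by (simp add: distributed_def distr_lborel_eq_distr_borel[symmetric] emeasure_density
               nn_integral_0_iff_AE split: split_indicator)
    show ?thesis
      by (rule emeasure_eq_0[OF _ single sub]) simp
  qed
  have "emeasure M {\<omega>\<in>space M. H \<omega> * w (D \<omega>) = c} = emeasure M {\<omega>\<in>space M. (D \<omega>, H \<omega>) \<in> ?S}"
    by (rule arg_cong[where f="emeasure M"]) (auto simp: space_pair_measure)
  also have "\<dots> = (\<integral>\<^sup>+v. emeasure (distr M borel H) (Pair v -` ?S) \<partial>distr M borel D)"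
    by (rule indep_var_emeasure_slice[OF ind S])
  also have "\<dots> = (\<integral>\<^sup>+v. 0 \<partial>distr M borel D)"
    by (intro nn_integral_cong null)
  finally show ?thesis
    by simp
qed

lemma (in real_distribution) emeasure_greaterThanLessThan_cdf:
  assumes "u < v" and "emeasure M {v} = 0"
  shows "emeasure M {u<..<v} = ennreal (cdf M v - cdf M u)"
proof -
  have "{u<..v} = {u<..<v} \<union> {v}"
    using \<open>u < v\<close> by auto
  then have "cdf M v - cdf M u = measure M ({u<..<v} \<union> {v})"
    using cdf_diff_eq[OF \<open>u < v\<close>] by simp
  also have "\<dots> = measure M {u<..<v}"
    using assms by (subst finite_measure_Union) (auto simp: emeasure_eq_measure)
  finally show ?thesis
    by (simp add: emeasure_eq_measure)
qed

lemma (in real_distribution) borel_measurable_cdf: "cdf M \<in> borel_measurable borel"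
  by (rule borel_measurable_mono) (auto intro: monoI cdf_nondecreasing)

lemma (in prob_space) emeasure_indep_slices_between_cdf:
  fixes X Y :: "'a \<Rightarrow> real" and f a b :: "real \<Rightarrow> real"
  assumes ind: "indep_var borel Y borel X"
    and Y: "distributed M lborel Y (\<lambda>y. ennreal (f y))" "\<And>y. 0 \<le> f y" "AE \<omega> in M. 0 \<le> Y \<omega>"
    and no_atom: "\<And>c. 0 < c \<Longrightarrow> emeasure M {\<omega>\<in>space M. X \<omega> = c} = 0"
    and S: "S \<in> sets (borel \<Otimes>\<^sub>M borel)"
    and slice: "\<And>y. 0 < y \<Longrightarrow> Pair y -` S = {b y<..<a y}"
    and a_pos: "\<And>y. 0 < y \<Longrightarrow> 0 < a y"
  defines "F \<equiv> cdf (distr M lborel X)"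
  shows "emeasure M {\<omega>\<in>space M. (Y \<omega>, X \<omega>) \<in> S}
     = (\<integral>\<^sup>+y. ennreal (indicator {y. 0 < y \<and> b y < a y} y * (F (a y) - F (b y)) * f y) \<partial>lborel)"
proof -
  have X: "random_variable borel X"
    using ind by (rule indep_var_rv2)
  let ?PX = "distr M lborel X"
  interpret PX: real_distribution ?PX
    using X by (simp add: distr_lborel_eq_distr_borel)
  have f[measurable]: "(\<lambda>y. ennreal (f y)) \<in> borel_measurable lborel"
    using Y(1) by (rule distributed_borel_measurable)
  have f_support: "AE y in lborel. 0 < f y \<longrightarrow> 0 \<le> y"
    using distributed_AE2[OF Y(1)] Y(3) by simp
  have slice_measure: "ennreal (f y) * emeasure ?PX (Pair y -` S)
      = ennreal (indicator {y. 0 < y \<and> b y < a y} y * (F (a y) - F (b y)) * f y)"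
    if "0 < f y \<longrightarrow> 0 \<le> y" "y \<noteq> 0" for y
  proof (cases "0 < y \<and> b y < a y")
    case True
    have "emeasure ?PX {a y} = 0"
      using no_atom[of "a y"] a_pos True X by (simp add: emeasure_distr vimage_def Int_def conj_commute)
    then have "emeasure ?PX (Pair y -` S) = ennreal (F (a y) - F (b y))"
      using True by (simp add: slice F_def PX.emeasure_greaterThanLessThan_cdf)
    moreover have "F (b y) \<le> F (a y)"
      unfolding F_def using True by (intro PX.cdf_nondecreasing) simp
    ultimately show ?thesis
      using True Y(2)[of y] by (simp add: ennreal_mult[symmetric] mult.commute)
  next
    case False
    then have "f y = 0 \<or> Pair y -` S = {}"
      using that Y(2)[of y] slice[of y] by (cases "0 < y") auto
    then show ?thesis
      using False by auto
  qed
  have slice_measure_AE: "AE y in lborel. ennreal (f y) * emeasure ?PX (Pair y -` S)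
      = ennreal (indicator {y. 0 < y \<and> b y < a y} y * (F (a y) - F (b y)) * f y)"
    using f_support AE_lborel_singleton[of 0] by eventually_elim (rule slice_measure)
  have "emeasure M {\<omega>\<in>space M. (Y \<omega>, X \<omega>) \<in> S}
      = (\<integral>\<^sup>+y. emeasure ?PX (Pair y -` S) \<partial>distr M borel Y)"
    using indep_var_emeasure_slice[OF ind S] by (simp add: distr_lborel_eq_distr_borel)
  also have "\<dots> = (\<integral>\<^sup>+y. ennreal (f y) * emeasure ?PX (Pair y -` S) \<partial>lborel)"
    using Y(1) PX.measurable_emeasure_Pair[of S] S
    by (simp add: distributed_def distr_lborel_eq_distr_borel[symmetric] nn_integral_density
             cong: sets_pair_measure_cong)
  also have "\<dots> = (\<integral>\<^sup>+y. ennreal (indicator {y. 0 < y \<and> b y < a y} y * (F (a y) - F (b y)) * f y) \<partial>lborel)"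
    by (rule nn_integral_cong_AE[OF slice_measure_AE])
  finally show ?thesis .
qed

lemma (in prob_space) measure_indep_slices_between_cdf:
  fixes X Y :: "'a \<Rightarrow> real" and f a b :: "real \<Rightarrow> real" and \<sigma> :: ereal
  assumes ind: "indep_var borel Y borel X"
    and Y: "distributed M lborel Y (\<lambda>y. ennreal (f y))" "\<And>y. 0 \<le> f y" "AE \<omega> in M. 0 \<le> Y \<omega>"
    and no_atom: "\<And>c. 0 < c \<Longrightarrow> emeasure M {\<omega>\<in>space M. X \<omega> = c} = 0"
    and S: "S \<in> sets (borel \<Otimes>\<^sub>M borel)"
    and slice: "\<And>y. 0 < y \<Longrightarrow> Pair y -` S = {b y<..<a y}"
    and a_pos: "\<And>y. 0 < y \<Longrightarrow> 0 < a y"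
    and [measurable]: "a \<in> borel_measurable borel" "b \<in> borel_measurable borel"
    and \<sigma>: "0 \<le> \<sigma>" "\<And>y. 0 < y \<Longrightarrow> ereal y < \<sigma> \<longleftrightarrow> b y < a y"
  defines "F \<equiv> cdf (distr M lborel X)"
  shows "measure M {\<omega>\<in>space M. (Y \<omega>, X \<omega>) \<in> S}
     = (LBINT y=0..\<sigma>. F (a y) * f y) - (LBINT y=0..\<sigma>. F (b y) * f y)"
proof -
  have X: "random_variable borel X"
    using ind by (rule indep_var_rv2)
  interpret PX: real_distribution "distr M lborel X"
    using X by (simp add: distr_lborel_eq_distr_borel)
  have [measurable]: "F \<in> borel_measurable borel"
    unfolding F_def by (rule PX.borel_measurable_cdf)
  have [measurable]: "f \<in> borel_measurable borel"
    using distributed_real_measurable[OF Y(2,1)] by simp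
  have [measurable]: "Y \<in> borel_measurable M"
    using ind by (rule indep_var_rv1)
  have F_bounds: "0 \<le> F x" "F x \<le> 1" for x
    unfolding F_def by (rule PX.cdf_nonneg, rule PX.cdf_bounded_prob)
  have T: "{y. 0 < y \<and> b y < a y} = einterval 0 \<sigma>"
    using \<sigma>(2) by (auto simp: einterval_iff)
  have integrable: "set_integrable lborel (einterval 0 \<sigma>) (\<lambda>y. F (c y) * f y)"
    if [measurable]: "c \<in> borel_measurable borel" for c
  proof -
    have "integrable M (\<lambda>\<omega>. F (c (Y \<omega>)))"
      by (rule integrable_const_bound[where B=1]) (simp_all add: F_bounds abs_le_iff)
    then have "integrable lborel (\<lambda>y. f y * F (c y))"
      using distributed_integrable[OF Y(1)] Y(2) by simp
    then show ?thesis
      unfolding set_integrable_def by (intro integrable_mult_indicator) (simp_all add: mult.commute)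
  qed
  have nonneg: "0 \<le> indicator {y. 0 < y \<and> b y < a y} y * (F (a y) - F (b y)) * f y" for y
    using Y(2)[of y] PX.cdf_nondecreasing[of "b y" "a y"] by (auto simp: F_def indicator_def)
  have "measure M {\<omega>\<in>space M. (Y \<omega>, X \<omega>) \<in> S}
      = enn2real (\<integral>\<^sup>+y. ennreal (indicator {y. 0 < y \<and> b y < a y} y * (F (a y) - F (b y)) * f y) \<partial>lborel)"
    unfolding measure_def F_def
    by (subst emeasure_indep_slices_between_cdf[OF ind Y no_atom S slice a_pos]) simp_all
  also have "\<dots> = (\<integral>y. indicator {y. 0 < y \<and> b y < a y} y * (F (a y) - F (b y)) * f y \<partial>lborel)"
    using nonneg by (intro enn2real_nn_integral_eq_integral) simp_all
  also have "\<dots> = (LINT y:einterval 0 \<sigma>|lborel. F (a y) * f y - F (b y) * f y)"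
    by (simp add: set_lebesgue_integral_def T algebra_simps)
  also have "\<dots> = (LBINT y=0..\<sigma>. F (a y) * f y) - (LBINT y=0..\<sigma>. F (b y) * f y)"
    using \<sigma>(1) by (simp add: interval_lebesgue_integral_def integrable)
  finally show ?thesis .
qed

lemma (in prob_space)
  fixes hB hF :: "'a \<Rightarrow> real" and zB zF :: "'a \<Rightarrow> complex"
  assumes "indep_vars (\<lambda>_. borel)
       (\<lambda>i::nat. if i = 0 then hB else if i = 1 then hF
                 else if i = 2 then (\<lambda>\<omega>. cmod (zB \<omega>)) else (\<lambda>\<omega>. cmod (zF \<omega>))) {0, 1, 2, 3}"
  shows indep_var_gains: "indep_var borel (gain \<alpha> hF zF) borel (gain \<alpha> hB zB)"
    and indep_var_distance_fading: "indep_var borel (\<lambda>\<omega>. cmod (zB \<omega>)) borel hB"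
proof -
  have [measurable]: "(\<lambda>(h, d). h * d powr - \<alpha>) \<in> borel_measurable (borel :: (real \<times> real) measure)"
    unfolding borel_prod[symmetric] by measurable
  show "indep_var borel (gain \<alpha> hF zF) borel (gain \<alpha> hB zB)"
    using indep_var_compose_pairs[OF assms, of 1 3 0 2 "\<lambda>(h, d). h * d powr - \<alpha>" "\<lambda>(h, d). h * d powr - \<alpha>"]
    by (simp add: gain_def[abs_def])
  show "indep_var borel (\<lambda>\<omega>. cmod (zB \<omega>)) borel hB"
    using indep_var_compose_pairs[OF assms, of 2 2 0 0 fst fst] by (simp add: borel_prod[symmetric])
qed

lemma (in prob_space) AE_gain_nonneg:
  assumes "distributed M lborel h (exponential_density l)"
  shows "AE \<omega> in M. 0 \<le> gain \<alpha> h z \<omega>"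
proof -
  have "AE \<omega> in M. 0 \<le> h \<omega>"
    using distributed_AE2[OF assms, of "\<lambda>x. 0 \<le> x"] by (simp add: exponential_density_def)
  then show ?thesis
    by eventually_elim (simp add: gain_def)
qed

lemma outage_region_slice:
  fixes \<rho>B \<rho>F \<gamma> y :: real
  assumes "0 < \<rho>B" "0 < \<rho>F" "0 < y"
  shows "{x. \<rho>B * x / (\<rho>F * y + 1) < \<gamma> \<and> y < \<rho>B / \<rho>F * x}
       = {\<rho>F / \<rho>B * y<..<(\<gamma> * \<rho>F * y + \<gamma>) / \<rho>B}"
proof -
  have "0 < \<rho>F * y + 1"
    using assms by (simp add: add_pos_pos)
  then show ?thesis
    using assms by (auto simp: field_simps)
qed

lemma (in prob_space) measure_outage_eq_cdf_integrals:
  fixes X Y :: "'a \<Rightarrow> real" and f :: "real \<Rightarrow> real" and \<sigma> :: ereal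
  assumes ind: "indep_var borel Y borel X"
    and Y: "distributed M lborel Y (\<lambda>y. ennreal (f y))" "\<And>y. 0 \<le> f y" "AE \<omega> in M. 0 \<le> Y \<omega>"
    and no_atom: "\<And>c. 0 < c \<Longrightarrow> emeasure M {\<omega>\<in>space M. X \<omega> = c} = 0"
    and pos: "0 < \<rho>B" "0 < \<rho>F" "0 < \<gamma>"
    and \<sigma>: "0 \<le> \<sigma>" "\<And>y. 0 < y \<Longrightarrow> ereal y < \<sigma> \<longleftrightarrow> \<rho>F * y < \<gamma> * \<rho>F * y + \<gamma>"
  defines "F \<equiv> cdf (distr M lborel X)"
  shows "measure M {\<omega>\<in>space M. \<rho>B * X \<omega> / (\<rho>F * Y \<omega> + 1) < \<gamma> \<and> Y \<omega> < \<rho>B / \<rho>F * X \<omega>}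
     = (LBINT y=0..\<sigma>. F ((\<gamma> * \<rho>F * y + \<gamma>) / \<rho>B) * f y) - (LBINT y=0..\<sigma>. F (\<rho>F / \<rho>B * y) * f y)"
proof -
  define S where "S = {p\<in>space (borel \<Otimes>\<^sub>M borel). \<rho>B * snd p / (\<rho>F * fst p + 1) < \<gamma> \<and> fst p < \<rho>B / \<rho>F * snd p}"
  have S: "S \<in> sets (borel \<Otimes>\<^sub>M borel)"
    unfolding S_def by measurable
  have slice: "Pair y -` S = {\<rho>F / \<rho>B * y<..<(\<gamma> * \<rho>F * y + \<gamma>) / \<rho>B}" if "0 < y" for y
    using outage_region_slice[OF pos(1,2) that, of \<gamma>] by (simp add: S_def space_pair_measure)
  have "{\<omega>\<in>space M. \<rho>B * X \<omega> / (\<rho>F * Y \<omega> + 1) < \<gamma> \<and> Y \<omega> < \<rho>B / \<rho>F * X \<omega>}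
      = {\<omega>\<in>space M. (Y \<omega>, X \<omega>) \<in> S}"
    by (auto simp: S_def space_pair_measure)
  also have "measure M \<dots> = (LBINT y=0..\<sigma>. F ((\<gamma> * \<rho>F * y + \<gamma>) / \<rho>B) * f y) - (LBINT y=0..\<sigma>. F (\<rho>F / \<rho>B * y) * f y)"
    unfolding F_def
  proof (rule measure_indep_slices_between_cdf[OF ind Y no_atom S slice])
    show "0 < (\<gamma> * \<rho>F * y + \<gamma>) / \<rho>B" if "0 < y" for y
      using that pos by (simp add: add_pos_pos)
    show "ereal y < \<sigma> \<longleftrightarrow> \<rho>F / \<rho>B * y < (\<gamma> * \<rho>F * y + \<gamma>) / \<rho>B" if "0 < y" for y
      using \<sigma>(2)[OF that] pos by (simp add: field_simps)
  qed (use \<sigma>(1) in simp_all)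
  finally show ?thesis .
qed

lemma less_outage_bound_if_ge_1:
  fixes \<rho> \<gamma> y :: real
  assumes "1 \<le> \<gamma>" "0 \<le> \<rho> * y"
  shows "\<rho> * y < \<gamma> * \<rho> * y + \<gamma>"
proof -
  have "\<rho> * y \<le> \<gamma> * (\<rho> * y)"
    using assms mult_right_mono[of 1 \<gamma> "\<rho> * y"] by simp
  then show ?thesis
    using assms by simp
qed

lemma ereal_less_outage_threshold_iff:
  fixes \<rho> \<gamma> y :: real
  assumes "0 < \<rho>" "\<gamma> \<le> 1"
  shows "ereal y < (if \<gamma> = 1 then \<infinity> else ereal (\<gamma> / (\<rho> * (1 - \<gamma>)))) \<longleftrightarrow> \<rho> * y < \<gamma> * \<rho> * y + \<gamma>"
proof (cases "\<gamma> = 1")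
  case False
  then have "0 < \<rho> * (1 - \<gamma>)"
    using assms by simp
  then show ?thesis
    using False by (simp add: less_divide_eq algebra_simps)
qed simp

theorem theorem1:
  fixes M :: "'a measure"
    and zGB zGF :: "'a \<Rightarrow> complex"
    and hGB hGF :: "'a \<Rightarrow> real"
    and f :: "real \<Rightarrow> real"
    and R1 R2 \<alpha> lamGB lamGF PGB PGF \<sigma>2 \<rho>GB \<rho>GF \<gamma> :: real
  assumes M: "prob_space M"
    and R: "0 < R1" "R1 < R2"
    and alpha: "0 < \<alpha>"
    and lam: "0 < lamGB" "0 < lamGF"
    and pw: "0 < PGB" "0 < PGF" "0 < \<sigma>2"
    and gam: "0 < \<gamma>"
    and zGB: "zGB \<in> borel_measurable M" "distr M lborel zGB = uniform_measure lborel (cball 0 R1)"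
    and zGF: "zGF \<in> borel_measurable M" "distr M lborel zGF = uniform_measure lborel (annulus R1 R2)"
    and hGB: "distributed M lborel hGB (exponential_density (1 / lamGB))"
    and hGF: "distributed M lborel hGF (exponential_density (1 / lamGF))"
    and indep: "prob_space.indep_vars M (\<lambda>_. borel)
       (\<lambda>i::nat. if i = 0 then hGB else if i = 1 then hGF
                 else if i = 2 then (\<lambda>\<omega>. cmod (zGB \<omega>)) else (\<lambda>\<omega>. cmod (zGF \<omega>))) {0, 1, 2, 3}"
    and dens: "\<And>x. 0 \<le> f x"
      "distributed M lborel (gain \<alpha> hGF zGF) (\<lambda>x. ennreal (f x))"
    and rho: "\<rho>GB = PGB / \<sigma>2" "\<rho>GF = PGF / \<sigma>2"
  defines "F \<equiv> cdf (distr M lborel (gain \<alpha> hGB zGB))"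
    and "Pout \<equiv> measure M {\<omega> \<in> space M. \<rho>GB * gain \<alpha> hGB zGB \<omega> / (\<rho>GF * gain \<alpha> hGF zGF \<omega> + 1) < \<gamma>
                                         \<and> gain \<alpha> hGF zGF \<omega> < PGB / PGF * gain \<alpha> hGB zGB \<omega>}"
    and "\<sigma>1 \<equiv> (if \<gamma> = 1 then PInfty else ereal (\<gamma> / (\<rho>GF * (1 - \<gamma>))))"
  shows "(1 < \<gamma> \<longrightarrow>
            Pout = (LBINT x=0..\<infinity>. F ((\<gamma> * \<rho>GF * x + \<gamma>) / \<rho>GB) * f x)
                 - (LBINT x=0..\<infinity>. F (\<rho>GF / \<rho>GB * x) * f x))
       \<and> (\<gamma> \<le> 1 \<longrightarrow>
            Pout = (LBINT x=0..\<sigma>1. F ((\<gamma> * \<rho>GF * x + \<gamma>) / \<rho>GB) * f x)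
                 - (LBINT x=0..\<sigma>1. F (\<rho>GF / \<rho>GB * x) * f x))"
proof -
  interpret prob_space M
    by (rule M)
  have \<rho>: "0 < \<rho>GB" "0 < \<rho>GF" "PGB / PGF = \<rho>GB / \<rho>GF"
    using pw by (simp_all add: rho)
  have no_atom: "emeasure M {\<omega>\<in>space M. gain \<alpha> hGB zGB \<omega> = c} = 0" if "0 < c" for c
    using emeasure_indep_density_mult_eq_0[OF indep_var_distance_fading[OF indep] hGB, of "\<lambda>d. d powr - \<alpha>" c] that
    by (simp add: gain_def)
  have outage: "Pout = (LBINT x=0..\<sigma>. F ((\<gamma> * \<rho>GF * x + \<gamma>) / \<rho>GB) * f x) - (LBINT x=0..\<sigma>. F (\<rho>GF / \<rho>GB * x) * f x)"
    if "0 \<le> \<sigma>" "\<And>y. 0 < y \<Longrightarrow> ereal y < \<sigma> \<longleftrightarrow> \<rho>GF * y < \<gamma> * \<rho>GF * y + \<gamma>" for \<sigma>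
    unfolding Pout_def F_def \<rho>(3)
    by (rule measure_outage_eq_cdf_integrals[OF indep_var_gains[OF indep] dens(2,1) AE_gain_nonneg[OF hGF]
          no_atom \<rho>(1,2) gam that])
  show ?thesis
  proof (intro conjI impI)
    assume "1 < \<gamma>"
    then show "Pout = (LBINT x=0..\<infinity>. F ((\<gamma> * \<rho>GF * x + \<gamma>) / \<rho>GB) * f x)
                 - (LBINT x=0..\<infinity>. F (\<rho>GF / \<rho>GB * x) * f x)"
      using \<rho>(2) by (intro outage) (simp_all add: less_outage_bound_if_ge_1)
  next
    assume "\<gamma> \<le> 1"
    show "Pout = (LBINT x=0..\<sigma>1. F ((\<gamma> * \<rho>GF * x + \<gamma>) / \<rho>GB) * f x)
                 - (LBINT x=0..\<sigma>1. F (\<rho>GF / \<rho>GB * x) * f x)"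
      unfolding \<sigma>1_def PInfty_eq_infinity
      by (rule outage) (use \<open>\<gamma> \<le> 1\<close> \<rho> gam ereal_less_outage_threshold_iff[OF \<rho>(2) \<open>\<gamma> \<le> 1\<close>] in auto)
  qed
qed

end
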